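(* Let $f:\mathbb{R}^N\to\mathbb{R}^N$ be $C^2$, equivariant with respect to a compact group $\Gamma\subseteq O(N)$ (i.e. $f(\gamma x)=\gamma f(x)$ for all $x,\gamma$), and let $x_\ast$ be a periodic solution of $\dot x=f(x)$ with minimal period $p>0$ which is a discrete wave with $H/K\cong\mathbb{Z}_n$, $n\in\mathbb{N}$. Fix a spatio-temporal symmetry $h\in H$ with time shift $\theta_h$ and a scalar $b\in\mathbb{R}$, and let $U(t,s)$, $t\ge s$, be the family of solution operators on $C([-\theta_h,0],\mathbb{R}^N)$ of the linear DDE $$\dot y(t)=f'(x_\ast(t))y(t)+b\,[y(t)-h\,y(t-\theta_h)].$$ Then for all $t\ge s$, $$hU(t,s)=U(t+\theta_h,s+\theta_h)h\qquad\text{and}\qquad h^nU(t,s)=U(t,s)h^n.$$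
   Context: $K=\{\gamma\in\Gamma\mid\gamma x_\ast(0)=x_\ast(0)\}$, $H=\{\gamma\in\Gamma\mid\gamma\mathcal{O}=\mathcal{O}\}$ where $\mathcal{O}$ is the orbit of $x_\ast$; for $h\in H$, $\theta_h\in[0,p)$ is defined by $hx_\ast(t)=x_\ast(t+\theta_h)$ for all $t$. The solution operator $U(t,s)$ maps $\varphi\in C([-\theta_h,0],\mathbb{R}^N)$ to the history segment $y_t$ (with $y_t(\vartheta)=y(t+\vartheta)$, $\vartheta\in[-\theta_h,0]$) of the solution $y$ of the linear DDE with $y(s+\vartheta)=\varphi(\vartheta)$ for $\vartheta\in[-\theta_h,0]$. A matrix $h$ acts on $C([-\theta_h,0],\mathbb{R}^N)$ pointwise: $(h\varphi)(\vartheta)=h\varphi(\vartheta)$. *)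

theory Defs
  imports "HOL-Analysis.Analysis" "HOL-Algebra.Elementary_Groups"
begin

definition compact_orth_group :: "(real^'n^'n) set \<Rightarrow> bool" where
  "compact_orth_group G \<longleftrightarrow> compact G \<and> mat 1 \<in> G
     \<and> (\<forall>a\<in>G. \<forall>c\<in>G. a ** c \<in> G) \<and> (\<forall>a\<in>G. matrix_inv a \<in> G)
     \<and> (\<forall>a\<in>G. orthogonal_matrix a)"

definition matgrp :: "(real^'n^'n) set \<Rightarrow> (real^'n^'n) monoid" where
  "matgrp S = \<lparr>carrier = S, monoid.mult = (**), one = mat 1\<rparr>"

definition Kgrp :: "(real^'n^'n) set \<Rightarrow> (real \<Rightarrow> real^'n) \<Rightarrow> (real^'n^'n) set" where
  "Kgrp G x = {g \<in> G. g *v x 0 = x 0}"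

definition Hgrp :: "(real^'n^'n) set \<Rightarrow> (real \<Rightarrow> real^'n) \<Rightarrow> (real^'n^'n) set" where
  "Hgrp G x = {g \<in> G. (\<lambda>v. g *v v) ` range x = range x}"

primrec matpow :: "real^'n^'n \<Rightarrow> nat \<Rightarrow> real^'n^'n" where
  "matpow A 0 = mat 1"
| "matpow A (Suc k) = A ** matpow A k"

definition dde_sol :: "(real \<Rightarrow> real^'n \<Rightarrow> real^'n) \<Rightarrow> real^'n^'n \<Rightarrow> real \<Rightarrow> real
    \<Rightarrow> real \<Rightarrow> (real \<Rightarrow> real^'n) \<Rightarrow> (real \<Rightarrow> real^'n) \<Rightarrow> bool" where
  "dde_sol L h b th s phi y \<longleftrightarrow>
     (\<forall>v\<in>{-th..0}. y (s + v) = phi v) \<and> (\<forall>t. t < s - th \<longrightarrow> y t = 0)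
     \<and> continuous_on {s - th..} y
     \<and> (\<forall>t. t > s \<longrightarrow>
          (y has_vector_derivative (L t (y t) + b *\<^sub>R (y t - h *v y (t - th)))) (at t))"

definition solop :: "(real \<Rightarrow> real^'n \<Rightarrow> real^'n) \<Rightarrow> real^'n^'n \<Rightarrow> real \<Rightarrow> real
    \<Rightarrow> real \<Rightarrow> real \<Rightarrow> (real \<Rightarrow> real^'n) \<Rightarrow> real \<Rightarrow> real^'n" where
  "solop L h b th t s phi = (\<lambda>v. (THE y. dde_sol L h b th s phi y) (t + v))"

end

(* Both identities are uniqueness statements for the delay equation
     y'(t) = A(t) y(t) + b (y(t) - h y(t - th)),   A(t) = Df(x(t)).
   Solutions from a continuous initial history exist and are unique: they are the continuous fixed
   points of the Picard map, and the difference of k-fold Picard iterates is bounded by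
   c (K (t - s))^k / k!.  Differentiating f(g x) = g f(x) gives g Df(x) = Df(g x) g.  Since h maps
   x(t - th) to x(t), the function t |-> h y(t - th) solves the equation with history h phi started
   at s + th, which is the first identity.  For the second, H/K has order n, so h^n lies in K; by
   uniqueness for x' = f(x), every element of K fixes the whole orbit, hence h^n commutes with
   every A(t) and with h, and h^n y solves the equation with history h^n phi. *)

theory Submission
  imports Defs "HOL-Algebra.Multiplicative_Group"
begin

section \<open>Uniqueness for autonomous ODEs\<close>

lemma has_real_derivative_weighted_inner_self:
  fixes d :: "real \<Rightarrow> 'a::real_inner"
  assumes "(d has_vector_derivative d') (at t)"
  shows "((\<lambda>t. exp (k * t) * (d t \<bullet> d t)) has_real_derivative
           exp (k * t) * (k * (d t \<bullet> d t) + 2 * (d t \<bullet> d'))) (at t)"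
proof -
  note dt = assms[unfolded has_vector_derivative_def]
  have "((\<lambda>t. d t \<bullet> d t) has_real_derivative 2 * (d t \<bullet> d')) (at t)"
    by (rule has_derivative_imp_has_field_derivative[OF has_derivative_inner[OF dt dt]])
       (simp add: inner_commute algebra_simps)
  then show ?thesis by (auto intro!: derivative_eq_intros simp: algebra_simps)
qed

lemma vanishing_if_derivative_linearly_bounded:
  fixes d :: "real \<Rightarrow> 'a::real_inner"
  assumes der: "\<And>t. t \<in> closed_segment a b \<Longrightarrow> (d has_vector_derivative d' t) (at t)"
    and bound: "\<And>t. t \<in> closed_segment a b \<Longrightarrow> norm (d' t) \<le> C * norm (d t)"
    and start: "d a = 0"
  shows "d b = 0"
proof -
  define energy where "energy k t = exp (k * t) * (d t \<bullet> d t)" for k t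
  have energy_deriv: "(energy k has_real_derivative
      exp (k * t) * (k * (d t \<bullet> d t) + 2 * (d t \<bullet> d' t))) (at t)"
    if "t \<in> closed_segment a b" for k t
    unfolding energy_def[abs_def] by (rule has_real_derivative_weighted_inner_self[OF der[OF that]])
  have inner_bound: "\<bar>d t \<bullet> d' t\<bar> \<le> C * (d t \<bullet> d t)" if "t \<in> closed_segment a b" for t
  proof -
    have "\<bar>d t \<bullet> d' t\<bar> \<le> norm (d t) * norm (d' t)" by (rule Cauchy_Schwarz_ineq2)
    also have "\<dots> \<le> norm (d t) * (C * norm (d t))" by (intro mult_left_mono bound that) simp
    finally show ?thesis by (simp add: power2_norm_eq_inner[symmetric] power2_eq_square ac_simps)
  qed
  have "\<exists>k. energy k b \<le> energy k a"
  proof (cases "a \<le> b")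
    case True
    have "energy (-2 * C) b \<le> energy (-2 * C) a"
    proof (rule DERIV_nonpos_imp_nonincreasing[OF True])
      fix t assume "a \<le> t" "t \<le> b"
      then have t: "t \<in> closed_segment a b" by (simp add: closed_segment_eq_real_ivl)
      show "\<exists>y. (energy (-2 * C) has_real_derivative y) (at t) \<and> y \<le> 0"
        using energy_deriv[OF t] inner_bound[OF t] by (force intro!: mult_nonneg_nonpos)
    qed
    then show ?thesis ..
  next
    case False
    then have "b \<le> a" by simp
    have "energy (2 * C) b \<le> energy (2 * C) a"
    proof (rule DERIV_nonneg_imp_nondecreasing[OF \<open>b \<le> a\<close>])
      fix t assume "b \<le> t" "t \<le> a"
      then have t: "t \<in> closed_segment a b" by (simp add: closed_segment_eq_real_ivl)
      show "\<exists>y. (energy (2 * C) has_real_derivative y) (at t) \<and> y \<ge> 0"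
        using energy_deriv[OF t] inner_bound[OF t] by (force intro!: mult_nonneg_nonneg)
    qed
    then show ?thesis ..
  qed
  then have "d b \<bullet> d b \<le> 0"
    by (auto simp: energy_def start zero_le_mult_iff mult_le_0_iff)
  then show ?thesis by (metis inner_eq_zero_iff inner_ge_zero order_antisym)
qed

lemma autonomous_ode_solutions_unique:
  fixes f :: "'a::euclidean_space \<Rightarrow> 'a" and Df :: "'a \<Rightarrow> 'a \<Rightarrow>\<^sub>L 'a"
  assumes deriv: "\<And>x. (f has_derivative blinfun_apply (Df x)) (at x)"
    and Df_cont: "continuous_on UNIV Df"
    and x: "\<And>t. (x has_vector_derivative f (x t)) (at t)"
    and y: "\<And>t. (y has_vector_derivative f (y t)) (at t)"
    and agree: "x t0 = y t0"
  shows "x t = y t"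
proof -
  let ?I = "closed_segment t0 t"
  have "continuous_on ?I x" "continuous_on ?I y"
    using x y by (metis continuous_at_imp_continuous_on has_vector_derivative_continuous)+
  then have "compact (x ` ?I \<union> y ` ?I)"
    by (intro compact_Un compact_continuous_image compact_segment)
  then obtain R where R: "\<And>z. z \<in> x ` ?I \<union> y ` ?I \<Longrightarrow> norm z \<le> R"
    by (metis compact_imp_bounded bounded_iff)
  have "compact (Df ` cball 0 R)"
    by (intro compact_continuous_image continuous_on_subset[OF Df_cont]) auto
  then obtain B where B: "\<And>z. z \<in> cball 0 R \<Longrightarrow> norm (Df z) \<le> B"
    by (metis compact_imp_bounded bounded_iff imageI)
  have lipschitz: "norm (f u - f v) \<le> B * norm (u - v)" if "u \<in> cball 0 R" "v \<in> cball 0 R" for u v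
  proof (rule differentiable_bound[OF convex_cball _ _ that])
    fix z :: 'a assume "z \<in> cball 0 R"
    then show "onorm (blinfun_apply (Df z)) \<le> B" using B by (simp add: norm_blinfun.rep_eq)
    show "(f has_derivative blinfun_apply (Df z)) (at z within cball 0 R)"
      using deriv has_derivative_at_withinI by blast
  qed
  have "(\<lambda>t. x t - y t) t = 0"
  proof (rule vanishing_if_derivative_linearly_bounded)
    fix s assume s: "s \<in> ?I"
    show "((\<lambda>t. x t - y t) has_vector_derivative f (x s) - f (y s)) (at s)"
      using x y by (rule has_vector_derivative_diff)
    show "norm (f (x s) - f (y s)) \<le> B * norm (x s - y s)"
      using R s by (intro lipschitz) auto
  qed (use agree in simp)
  then show ?thesis by simp
qed

lemma derivative_equivariant:
  fixes f :: "'a::real_normed_vector \<Rightarrow> 'a" and Df :: "'a \<Rightarrow> 'a \<Rightarrow>\<^sub>L 'a"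
  assumes deriv: "\<And>x. (f has_derivative blinfun_apply (Df x)) (at x)"
    and g: "bounded_linear g" and equivariant: "\<And>x. f (g x) = g (f x)"
  shows "blinfun_apply (Df (g x)) (g v) = g (blinfun_apply (Df x) v)"
proof -
  have "((\<lambda>x. f (g x)) has_derivative (\<lambda>v. blinfun_apply (Df (g x)) (g v))) (at x)"
    using has_derivative_compose[OF bounded_linear_imp_has_derivative[OF g] deriv]
    by (simp add: o_def)
  moreover have "((\<lambda>x. f (g x)) has_derivative (\<lambda>v. g (blinfun_apply (Df x) v))) (at x)"
    unfolding equivariant by (rule bounded_linear.has_derivative[OF g deriv])
  ultimately show ?thesis by (metis has_derivative_unique)
qed

section \<open>The linear delay equation\<close>

lemma has_integral_power_shift:
  fixes s t :: real
  assumes "s \<le> t"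
  shows "((\<lambda>r. (r - s) ^ j) has_integral (t - s) ^ Suc j / Suc j) {s..t}"
proof -
  have "((\<lambda>r. (r - s) ^ j) has_integral
      (\<lambda>r. (r - s) ^ Suc j / Suc j) t - (\<lambda>r. (r - s) ^ Suc j / Suc j) s) {s..t}"
    by (rule fundamental_theorem_of_calculus[OF assms])
       (auto intro!: derivative_eq_intros simp: has_real_derivative_iff_has_vector_derivative[symmetric],
        cases j, simp_all add: field_simps)
  then show ?thesis by simp
qed

lemma continuous_on_atLeast_if_atLeastAtMost:
  fixes f :: "real \<Rightarrow> 'b::topological_space"
  assumes "\<And>T. c \<le> T \<Longrightarrow> continuous_on {a..T} f"
  shows "continuous_on {a..} f"
  unfolding continuous_on_eq_continuous_within
proof
  fix x assume x: "x \<in> {a..}"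
  define T where "T = max c (x + 1)"
  have "continuous (at x within {a..T}) f"
    using assms[of T] x by (auto simp: T_def continuous_on_eq_continuous_within)
  moreover have "at x within {a..T} = at x within {a..}"
    by (rule at_within_nhd[where S="{x - 1 <..< x + 1}"]) (auto simp: T_def)
  ultimately show "continuous (at x within {a..}) f" by simp
qed

lemma has_vector_derivative_delay:
  assumes "(y has_vector_derivative D) (at (t - d))"
  shows "((\<lambda>t. y (t - d)) has_vector_derivative D) (at t)"
proof -
  have "((\<lambda>t. t - d) has_vector_derivative 1) (at t)"
    using has_vector_derivative_diff[OF has_vector_derivative_id has_vector_derivative_const] by simp
  from vector_diff_chain_at[OF this assms] show ?thesis by (simp add: o_def)
qed

lemma dde_sol_shift:
  assumes y: "dde_sol L h b th s phi y" and shift: "\<And>t w. h *v L (t - th) w = L t (h *v w)"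
  shows "dde_sol L h b th (s + th) (\<lambda>v. h *v phi v) (\<lambda>t. h *v y (t - th))"
  unfolding dde_sol_def
proof (intro conjI ballI allI impI)
  fix v assume "v \<in> {-th..0}"
  then show "h *v y (s + th + v - th) = h *v phi v" using y by (simp add: dde_sol_def)
next
  fix t assume "t < s + th - th"
  then show "h *v y (t - th) = 0" using y by (simp add: dde_sol_def)
next
  have "continuous_on {s - th..} y" using y by (simp add: dde_sol_def)
  then have "continuous_on {s..} (\<lambda>t. y (t - th))"
    by (rule continuous_on_compose2) (auto intro!: continuous_intros)
  from bounded_linear.continuous_on[OF matrix_vector_mul_bounded_linear this]
  show "continuous_on {s + th - th..} (\<lambda>t. h *v y (t - th))" by simp
next
  fix t assume "s + th < t"
  then have "s < t - th" by simp
  then have "(y has_vector_derivative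
      L (t - th) (y (t - th)) + b *\<^sub>R (y (t - th) - h *v y (t - th - th))) (at (t - th))"
    using y unfolding dde_sol_def by blast
  from bounded_linear.has_vector_derivative[OF matrix_vector_mul_bounded_linear
      has_vector_derivative_delay[OF this], of h]
  show "((\<lambda>t. h *v y (t - th)) has_vector_derivative
      L t (h *v y (t - th)) + b *\<^sub>R (h *v y (t - th) - h *v (h *v y (t - th - th)))) (at t)"
    by (simp add: shift matrix_vector_mult_diff_distrib matrix_vector_mult_scaleR
        matrix_vector_right_distrib)
qed

lemma dde_sol_commute:
  assumes y: "dde_sol L h b th s phi y"
    and L: "\<And>t w. g *v L t w = L t (g *v w)" and gh: "g ** h = h ** g"
  shows "dde_sol L h b th s (\<lambda>v. g *v phi v) (\<lambda>t. g *v y t)"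
  unfolding dde_sol_def
proof (intro conjI ballI allI impI)
  show "continuous_on {s - th..} (\<lambda>t. g *v y t)"
    using y
    by (auto simp: dde_sol_def intro: bounded_linear.continuous_on[OF matrix_vector_mul_bounded_linear])
next
  fix t assume "s < t"
  then have "(y has_vector_derivative L t (y t) + b *\<^sub>R (y t - h *v y (t - th))) (at t)"
    using y by (simp add: dde_sol_def)
  from bounded_linear.has_vector_derivative[OF matrix_vector_mul_bounded_linear this, of g]
  show "((\<lambda>t. g *v y t) has_vector_derivative
      L t (g *v y t) + b *\<^sub>R (g *v y t - h *v (g *v y (t - th)))) (at t)"
    by (simp add: L matrix_vector_mul_assoc gh matrix_vector_mult_diff_distrib
        matrix_vector_mult_scaleR matrix_vector_right_distrib)
qed (use y in \<open>simp_all add: dde_sol_def\<close>)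

locale linear_dde =
  fixes A :: "real \<Rightarrow> (real^'n) \<Rightarrow>\<^sub>L (real^'n)" and h :: "real^'n^'n" and b th :: real
  assumes continuous_A: "continuous_on UNIV A" and delay_nonneg: "0 \<le> th"
begin

definition rhs :: "(real \<Rightarrow> real^'n) \<Rightarrow> real \<Rightarrow> real^'n" where
  "rhs y r = blinfun_apply (A r) (y r) + b *\<^sub>R (y r - h *v y (r - th))"

definition picard :: "real \<Rightarrow> (real \<Rightarrow> real^'n) \<Rightarrow> (real \<Rightarrow> real^'n) \<Rightarrow> real \<Rightarrow> real^'n" where
  "picard s phi y t =
     (if t < s - th then 0 else if t \<le> s then phi (t - s) else phi 0 + integral {s..t} (rhs y))"

definition lipschitz_const :: "real \<Rightarrow> real" where
  "lipschitz_const M = M + \<bar>b\<bar> * (1 + onorm ((*v) h))"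

(* The limit of the Picard iterates started at 0, written as a telescoping series so that the
   Weierstrass M-test applies. *)
definition picard_limit :: "real \<Rightarrow> (real \<Rightarrow> real^'n) \<Rightarrow> real \<Rightarrow> real^'n" where
  "picard_limit s phi t =
     (\<Sum>k. (picard s phi ^^ Suc k) (\<lambda>_. 0) t - (picard s phi ^^ k) (\<lambda>_. 0) t)"

abbreviation sol :: "real \<Rightarrow> (real \<Rightarrow> real^'n) \<Rightarrow> (real \<Rightarrow> real^'n) \<Rightarrow> bool" where
  "sol s phi y \<equiv> dde_sol (\<lambda>r. blinfun_apply (A r)) h b th s phi y"

lemma lipschitz_const_nonneg: "0 \<le> M \<Longrightarrow> 0 \<le> lipschitz_const M"
  by (simp add: lipschitz_const_def onorm_pos_le[OF matrix_vector_mul_bounded_linear])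

lemma norm_A_bounded_on_Icc:
  obtains M where "0 \<le> M" and "\<And>r. r \<in> {l..u} \<Longrightarrow> norm (A r) \<le> M"
proof -
  have "bounded (A ` {l..u})"
    by (intro compact_imp_bounded compact_continuous_image continuous_on_subset[OF continuous_A]
        compact_Icc) auto
  then obtain M where "0 < M" "\<forall>r\<in>{l..u}. norm (A r) \<le> M" by (auto simp: bounded_pos)
  then show ?thesis using that[of M] by auto
qed

lemma continuous_on_rhs:
  assumes "continuous_on {s - th..T} y"
  shows "continuous_on {s..T} (rhs y)"
proof -
  have "continuous_on {s..T} y"
    by (rule continuous_on_subset[OF assms]) (use delay_nonneg in auto)
  moreover have "continuous_on {s..T} (\<lambda>r. y (r - th))"
    by (rule continuous_on_compose2[OF assms]) (use delay_nonneg in \<open>auto intro: continuous_intros\<close>)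
  moreover have "continuous_on {s..T} A"
    by (rule continuous_on_subset[OF continuous_A]) auto
  ultimately show ?thesis
    unfolding rhs_def[abs_def]
    by (intro continuous_intros bounded_linear.continuous_on[OF matrix_vector_mul_bounded_linear])
qed

lemma continuous_on_picard:
  assumes phi: "continuous_on {-th..0} phi" and y: "continuous_on {s - th..T} y" and "s \<le> T"
  shows "continuous_on {s - th..T} (picard s phi y)"
proof -
  let ?g = "\<lambda>t. if t \<le> s then phi (t - s) else phi 0 + integral {s..t} (rhs y)"
  have "continuous_on {s - th..s} (\<lambda>t. phi (t - s))"
    by (rule continuous_on_compose2[OF phi]) (auto intro: continuous_intros)
  moreover have "continuous_on {s..T} (\<lambda>t. phi 0 + integral {s..t} (rhs y))"
    by (intro continuous_intros indefinite_integral_continuous_1 integrable_continuous_interval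
        continuous_on_rhs y)
  ultimately have "continuous_on ({s - th..s} \<union> {s..T}) ?g"
    by (intro continuous_on_closed_Un) (auto elim!: continuous_on_eq)
  moreover have "{s - th..s} \<union> {s..T} = {s - th..T}"
    using delay_nonneg \<open>s \<le> T\<close> by auto
  ultimately show ?thesis
    by (auto simp: picard_def elim!: continuous_on_eq)
qed

lemma norm_rhs_diff_le:
  assumes "norm (A r) \<le> M" and "norm (y r - z r) \<le> e" and "norm (y (r - th) - z (r - th)) \<le> e"
  shows "norm (rhs y r - rhs z r) \<le> lipschitz_const M * e"
proof -
  let ?d = "y r - z r" and ?d' = "y (r - th) - z (r - th)"
  have h_bound: "norm (h *v ?d') \<le> onorm ((*v) h) * e"
    using onorm[OF matrix_vector_mul_bounded_linear, of h ?d'] assms(3)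
      onorm_pos_le[OF matrix_vector_mul_bounded_linear, of h]
    by (meson mult_left_mono order_trans)
  have "rhs y r - rhs z r = blinfun_apply (A r) ?d + b *\<^sub>R (?d - h *v ?d')"
    by (simp add: rhs_def blinfun.diff_right matrix_vector_mult_diff_distrib algebra_simps)
  also have "norm \<dots> \<le> norm (A r) * norm ?d + \<bar>b\<bar> * (norm ?d + norm (h *v ?d'))"
    by (smt (verit) norm_blinfun norm_scaleR norm_triangle_ineq norm_triangle_ineq4
        mult_left_mono abs_ge_zero)
  also have "\<dots> \<le> M * e + \<bar>b\<bar> * (e + onorm ((*v) h) * e)"
    using assms h_bound by (intro add_mono mult_mono mult_left_mono) (auto intro: order_trans[OF norm_ge_zero])
  also have "\<dots> = lipschitz_const M * e"
    by (simp add: lipschitz_const_def algebra_simps)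
  finally show ?thesis .
qed

lemma norm_picard_diff_le:
  assumes A_bound: "\<And>r. r \<in> {s..T} \<Longrightarrow> norm (A r) \<le> M"
    and y: "continuous_on {s - th..T} y" and z: "continuous_on {s - th..T} z"
    and "0 \<le> c" and yz: "\<And>r. r \<in> {s - th..T} \<Longrightarrow> norm (y r - z r) \<le> c * (max (r - s) 0) ^ j"
    and "t \<le> T"
  shows "norm (picard s phi y t - picard s phi z t)
           \<le> lipschitz_const M * c * (max (t - s) 0) ^ Suc j / Suc j"
proof (cases "t \<le> s")
  case True
  then show ?thesis by (simp add: picard_def)
next
  case False
  with \<open>t \<le> T\<close> have st: "s < t" "t \<le> T" by auto
  have integrable: "rhs y integrable_on {s..t}" "rhs z integrable_on {s..t}"
    using continuous_on_rhs[OF y] continuous_on_rhs[OF z] st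
    by (auto intro!: integrable_continuous_interval elim!: continuous_on_subset)
  have power_integral: "((\<lambda>r. lipschitz_const M * c * (r - s) ^ j) has_integral
      lipschitz_const M * c * ((t - s) ^ Suc j / Suc j)) {s..t}"
    using has_integral_power_shift[of s t j] st by (intro has_integral_mult_right) simp
  have "picard s phi y t - picard s phi z t = integral {s..t} (\<lambda>r. rhs y r - rhs z r)"
    using st delay_nonneg by (simp add: picard_def integral_diff[OF integrable])
  also have "norm \<dots> \<le> integral {s..t} (\<lambda>r. lipschitz_const M * c * (r - s) ^ j)"
  proof (rule integral_norm_bound_integral)
    show "(\<lambda>r. rhs y r - rhs z r) integrable_on {s..t}"
      using integrable by (rule integrable_diff)
    show "(\<lambda>r. lipschitz_const M * c * (r - s) ^ j) integrable_on {s..t}"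
      using power_integral by blast
    fix r assume r: "r \<in> {s..t}"
    have "norm (y (r - th) - z (r - th)) \<le> c * (max (r - th - s) 0) ^ j"
      using yz[of "r - th"] r st delay_nonneg by auto
    also have "\<dots> \<le> c * (r - s) ^ j"
      using r delay_nonneg \<open>0 \<le> c\<close> by (intro mult_left_mono power_mono) auto
    finally have "norm (rhs y r - rhs z r) \<le> lipschitz_const M * (c * (r - s) ^ j)"
      using r st delay_nonneg yz[of r] A_bound[of r] by (intro norm_rhs_diff_le) auto
    then show "norm (rhs y r - rhs z r) \<le> lipschitz_const M * c * (r - s) ^ j"
      by (simp add: mult_ac)
  qed
  also have "\<dots> = lipschitz_const M * c * (t - s) ^ Suc j / Suc j"
    using integral_unique[OF power_integral] by simp
  finally show ?thesis using st by simp
qed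

lemma norm_picard_iterate_diff_le:
  assumes "s \<le> T" and A_bound: "\<And>r. r \<in> {s..T} \<Longrightarrow> norm (A r) \<le> M"
    and y: "\<And>k. continuous_on {s - th..T} ((picard s phi ^^ k) y)"
    and z: "\<And>k. continuous_on {s - th..T} ((picard s phi ^^ k) z)"
    and "0 \<le> c" and yz: "\<And>r. r \<in> {s - th..T} \<Longrightarrow> norm (y r - z r) \<le> c"
    and t: "t \<in> {s - th..T}"
  shows "norm ((picard s phi ^^ k) y t - (picard s phi ^^ k) z t)
           \<le> c * (lipschitz_const M * max (t - s) 0) ^ k / fact k"
  using t
proof (induction k arbitrary: t)
  case 0
  then show ?case using yz by simp
next
  case (Suc k)
  have "0 \<le> M" using A_bound[of s] \<open>s \<le> T\<close> by (auto intro: order_trans[OF norm_ge_zero])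
  then have "0 \<le> lipschitz_const M" by (rule lipschitz_const_nonneg)
  then have "0 \<le> c * lipschitz_const M ^ k / fact k" using \<open>0 \<le> c\<close> by simp
  moreover have "norm ((picard s phi ^^ k) y r - (picard s phi ^^ k) z r)
      \<le> c * lipschitz_const M ^ k / fact k * (max (r - s) 0) ^ k" if "r \<in> {s - th..T}" for r
    using Suc.IH[OF that] by (simp add: power_mult_distrib)
  ultimately have "norm ((picard s phi ^^ Suc k) y t - (picard s phi ^^ Suc k) z t)
      \<le> lipschitz_const M * (c * lipschitz_const M ^ k / fact k) * (max (t - s) 0) ^ Suc k / Suc k"
    using Suc.prems by (simp only: funpow.simps o_apply) (rule norm_picard_diff_le[OF A_bound y z]; simp)
  then show ?case
    by (simp add: power_mult_distrib field_simps)
qed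

lemma picard_fixed_point_if_dde_sol:
  assumes y: "sol s phi y"
  shows "picard s phi y = y"
proof
  fix t
  show "picard s phi y t = y t"
  proof (cases "t \<le> s")
    case True
    show ?thesis
    proof (cases "t < s - th")
      case True
      then show ?thesis using y by (simp add: dde_sol_def picard_def)
    next
      case False
      then have "t - s \<in> {-th..0}" using \<open>t \<le> s\<close> by auto
      then have "y (s + (t - s)) = phi (t - s)" using y unfolding dde_sol_def by blast
      then show ?thesis using False \<open>t \<le> s\<close> by (simp add: picard_def)
    qed
  next
    case False
    have "(rhs y has_integral y t - y s) {s..t}"
    proof (rule fundamental_theorem_of_calculus_interior)
      show "continuous_on {s..t} y"
        using y delay_nonneg by (auto simp: dde_sol_def elim!: continuous_on_subset)
      fix r assume "r \<in> {s<..<t}"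
      then show "(y has_vector_derivative rhs y r) (at r)"
        using y by (simp add: dde_sol_def rhs_def)
    qed (use False in simp)
    moreover have "0 \<in> {-th..0}" using delay_nonneg by simp
    then have "y (s + 0) = phi 0" using y unfolding dde_sol_def by blast
    ultimately show ?thesis
      using False delay_nonneg by (simp add: picard_def integral_unique)
  qed
qed

lemma dde_sol_if_picard_fixed_point:
  assumes cont: "continuous_on {s - th..} y" and fixed: "picard s phi y = y"
  shows "sol s phi y"
  unfolding dde_sol_def
proof (intro conjI ballI allI impI)
  fix v assume "v \<in> {-th..0}"
  then show "y (s + v) = phi v" using fun_cong[OF fixed, of "s + v"] by (simp add: picard_def)
next
  fix t assume "t < s - th"
  then show "y t = 0" using fun_cong[OF fixed, of t] by (simp add: picard_def)
next
  fix t assume "s < t"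
  have "continuous_on {s..t + 1} (rhs y)"
    using cont by (intro continuous_on_rhs) (auto elim!: continuous_on_subset)
  from integral_has_vector_derivative[OF this, of t]
  have "((\<lambda>u. phi 0 + integral {s..u} (rhs y)) has_vector_derivative rhs y t) (at t)"
    using \<open>s < t\<close> by (auto simp: at_within_Icc_at intro!: derivative_eq_intros)
  then have "(y has_vector_derivative rhs y t) (at t)"
  proof (rule has_vector_derivative_transform_within_open[where S="{s<..}"])
    fix u assume "u \<in> {s<..}"
    then show "phi 0 + integral {s..u} (rhs y) = y u"
      using fun_cong[OF fixed, of u] delay_nonneg by (simp add: picard_def)
  qed (use \<open>s < t\<close> in auto)
  then show "(y has_vector_derivative
      blinfun_apply (A t) (y t) + b *\<^sub>R (y t - h *v y (t - th))) (at t)"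
    by (simp add: rhs_def)
qed (rule cont)

lemma dde_sol_unique:
  assumes y: "sol s phi y" and z: "sol s phi z"
  shows "y = z"
proof
  fix t
  show "y t = z t"
  proof (cases "t < s - th")
    case True
    then show ?thesis using y z by (simp add: dde_sol_def)
  next
    case False
    define T where "T = max s t"
    have "s \<le> T" and t: "t \<in> {s - th..T}" using False by (auto simp: T_def)
    have y': "continuous_on {s - th..} y" "picard s phi y = y"
      and z': "continuous_on {s - th..} z" "picard s phi z = z"
      using y z by (simp_all add: dde_sol_def picard_fixed_point_if_dde_sol)
    have iterate: "(picard s phi ^^ k) y = y" "(picard s phi ^^ k) z = z" for k
      by (induction k) (simp_all add: y'(2) z'(2))
    have "{s - th..T} \<subseteq> {s - th..}" by auto
    then have cont: "continuous_on {s - th..T} y" "continuous_on {s - th..T} z"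
      using y'(1) z'(1) by (auto intro: continuous_on_subset)
    obtain M where M: "\<And>r. r \<in> {s..T} \<Longrightarrow> norm (A r) \<le> M"
      using norm_A_bounded_on_Icc[where l = s and u = T] by blast
    have "bounded ((\<lambda>r. y r - z r) ` {s - th..T})"
      by (intro compact_imp_bounded compact_continuous_image continuous_on_diff cont compact_Icc)
    then obtain c where "0 < c" and c: "\<And>r. r \<in> {s - th..T} \<Longrightarrow> norm (y r - z r) \<le> c"
      by (auto simp: bounded_pos)
    then have "0 \<le> c" by simp
    define x where "x = lipschitz_const M * max (t - s) 0"
    have "norm ((picard s phi ^^ k) y t - (picard s phi ^^ k) z t) \<le> c * x ^ k / fact k" for k
      unfolding x_def
      by (rule norm_picard_iterate_diff_le[OF \<open>s \<le> T\<close> M _ _ \<open>0 \<le> c\<close> c t])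
         (simp_all add: iterate cont)
    then have "norm (y t - z t) \<le> c * x ^ k / fact k" for k by (simp only: iterate)
    moreover have "(\<lambda>k. c * (inverse (fact k) * x ^ k)) \<longlonglongrightarrow> 0"
      using summable_LIMSEQ_zero[OF summable_exp[of x]] by (rule tendsto_mult_right_zero)
    ultimately have "norm (y t - z t) \<le> 0"
      by (intro LIMSEQ_le_const) (auto simp: divide_inverse mult_ac)
    then show ?thesis by simp
  qed
qed

lemma solop_eq:
  assumes "sol s phi y"
  shows "solop (\<lambda>r. blinfun_apply (A r)) h b th t s phi v = y (t + v)"
proof -
  have "(THE y. sol s phi y) = y"
    by (metis assms dde_sol_unique the_equality)
  then show ?thesis by (simp add: solop_def)
qed

lemma tendsto_picard_uniform_limit:
  assumes "s \<le> T" and lim: "uniform_limit {s - th..T} f Y sequentially"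
    and f: "\<And>k. continuous_on {s - th..T} (f k)" and Y: "continuous_on {s - th..T} Y"
    and "t \<le> T"
  shows "(\<lambda>k. picard s phi (f k) t) \<longlonglongrightarrow> picard s phi Y t"
proof (rule tendstoI)
  fix e :: real assume "0 < e"
  obtain M where "0 \<le> M" and M: "\<And>r. r \<in> {s..T} \<Longrightarrow> norm (A r) \<le> M"
    using norm_A_bounded_on_Icc[where l = s and u = T] by blast
  define C where "C = lipschitz_const M * max (t - s) 0"
  have "0 \<le> C" using lipschitz_const_nonneg[OF \<open>0 \<le> M\<close>] by (simp add: C_def)
  with \<open>0 < e\<close> have "0 < e / (C + 1)" by simp
  from uniform_limitD[OF lim this]
  show "\<forall>\<^sub>F k in sequentially. dist (picard s phi (f k) t) (picard s phi Y t) < e"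
  proof eventually_elim
    case (elim k)
    have "norm (picard s phi (f k) t - picard s phi Y t)
        \<le> lipschitz_const M * (e / (C + 1)) * (max (t - s) 0) ^ Suc 0 / Suc 0"
      by (rule norm_picard_diff_le[OF M f Y _ _ \<open>t \<le> T\<close>])
         (use elim \<open>0 < e / (C + 1)\<close> in \<open>auto simp: dist_norm intro: less_imp_le\<close>)
    also have "\<dots> = C * (e / (C + 1))"
      by (simp add: C_def)
    also have "\<dots> < e"
      using \<open>0 \<le> C\<close> \<open>0 < e\<close> by (simp add: field_simps)
    finally show ?case by (simp add: dist_norm)
  qed
qed

lemma continuous_on_picard_iterate:
  assumes phi: "continuous_on {-th..0} phi" and "s \<le> T"
  shows "continuous_on {s - th..T} ((picard s phi ^^ k) (\<lambda>_. 0))"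
  by (induction k) (simp_all add: continuous_on_picard[OF phi _ \<open>s \<le> T\<close>])

lemma uniform_limit_picard_iterates:
  assumes phi: "continuous_on {-th..0} phi" and "s \<le> T"
  shows "uniform_limit {s - th..T} (\<lambda>k. (picard s phi ^^ k) (\<lambda>_. 0)) (picard_limit s phi)
           sequentially"
proof -
  let ?y = "\<lambda>k. (picard s phi ^^ k) (\<lambda>_. 0)"
  let ?w = "\<lambda>k t. ?y (Suc k) t - ?y k t"
  obtain M where M: "\<And>r. r \<in> {s..T} \<Longrightarrow> norm (A r) \<le> M" and "0 \<le> M"
    using norm_A_bounded_on_Icc[where l = s and u = T] by blast
  have "bounded ((\<lambda>r. ?y 1 r - ?y 0 r) ` {s - th..T})"
    by (intro compact_imp_bounded compact_continuous_image continuous_on_diff compact_Icc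
        continuous_on_picard_iterate[OF phi \<open>s \<le> T\<close>])
  then obtain c where "0 < c" and c: "\<And>r. r \<in> {s - th..T} \<Longrightarrow> norm (?y 1 r - ?y 0 r) \<le> c"
    by (auto simp: bounded_pos)
  have iterates: "(picard s phi ^^ j) (?y i) = ?y (j + i)" for i j
    by (simp add: funpow_add)
  have cont: "continuous_on {s - th..T} ((picard s phi ^^ j) (?y i))" for i j
    unfolding iterates by (rule continuous_on_picard_iterate[OF phi \<open>s \<le> T\<close>])
  define x where "x = lipschitz_const M * (T - s)"
  have "norm (?w k t) \<le> c * x ^ k / fact k" if t: "t \<in> {s - th..T}" for k t
  proof -
    have "norm ((picard s phi ^^ k) (?y 1) t - (picard s phi ^^ k) (?y 0) t)
        \<le> c * (lipschitz_const M * max (t - s) 0) ^ k / fact k"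
      using norm_picard_iterate_diff_le[OF \<open>s \<le> T\<close> M cont cont _ c t] \<open>0 < c\<close> by simp
    also have "\<dots> \<le> c * x ^ k / fact k"
      using lipschitz_const_nonneg[OF \<open>0 \<le> M\<close>] \<open>0 < c\<close> \<open>s \<le> T\<close> t
      by (intro divide_right_mono mult_left_mono power_mono) (auto simp: x_def intro!: mult_left_mono)
    finally show ?thesis using iterates[of k 1] by simp
  qed
  moreover have "summable (\<lambda>k. c * x ^ k / fact k)"
    using summable_mult[OF summable_exp[of x], of c] by (simp add: divide_inverse mult_ac)
  ultimately have "uniform_limit {s - th..T} (\<lambda>n t. \<Sum>k<n. ?w k t) (picard_limit s phi) sequentially"
    unfolding picard_limit_def by (rule Weierstrass_m_test)
  moreover have "(\<Sum>k<n. ?w k t) = ?y n t" for n t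
    using sum_lessThan_telescope[of "\<lambda>k. ?y k t" n] by simp
  ultimately show ?thesis by simp
qed

lemma dde_sol_picard_limit:
  assumes phi: "continuous_on {-th..0} phi"
  shows "sol s phi (picard_limit s phi)"
proof -
  let ?y = "\<lambda>k. (picard s phi ^^ k) (\<lambda>_. 0)" and ?Y = "picard_limit s phi"
  note uniform = uniform_limit_picard_iterates[OF phi, where s = s]
  note cont_y = continuous_on_picard_iterate[OF phi, where s = s]
  have cont_Y: "continuous_on {s - th..T} ?Y" if "s \<le> T" for T
    by (rule uniform_limit_theorem[OF _ uniform[OF that]]) (simp_all add: cont_y[OF that])
  have lim: "(\<lambda>k. ?y k t) \<longlonglongrightarrow> ?Y t" for t
  proof (cases "t < s - th")
    case True
    then have "?y k t = 0" for k by (cases k) (simp_all add: picard_def)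
    then show ?thesis by (simp only: picard_limit_def diff_self suminf_zero tendsto_const)
  next
    case False
    then show ?thesis
      using tendsto_uniform_limitI[OF uniform[where T = "max s t"], of t] by simp
  qed
  have "picard s phi ?Y = ?Y"
  proof
    fix t
    have T: "s \<le> max s t" "t \<le> max s t" by simp_all
    have "(\<lambda>k. picard s phi (?y k) t) \<longlonglongrightarrow> picard s phi ?Y t"
      by (rule tendsto_picard_uniform_limit[OF T(1) uniform cont_y cont_Y T(2)]) (use T in simp_all)
    moreover have "(\<lambda>k. picard s phi (?y k) t) \<longlonglongrightarrow> ?Y t"
      using LIMSEQ_Suc[OF lim] by simp
    ultimately show "picard s phi ?Y t = ?Y t" by (rule LIMSEQ_unique)
  qed
  moreover have "continuous_on {s - th..} ?Y"
    by (rule continuous_on_atLeast_if_atLeastAtMost[OF cont_Y])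
  ultimately show ?thesis by (intro dde_sol_if_picard_fixed_point)
qed

lemma solop_shift:
  assumes phi: "continuous_on {-th..0} phi"
    and shift: "\<And>t w. h *v blinfun_apply (A (t - th)) w = blinfun_apply (A t) (h *v w)"
  shows "h *v solop (\<lambda>r. blinfun_apply (A r)) h b th t s phi v
           = solop (\<lambda>r. blinfun_apply (A r)) h b th (t + th) (s + th) (\<lambda>u. h *v phi u) v"
proof -
  note y = dde_sol_picard_limit[OF phi]
  have "sol (s + th) (\<lambda>u. h *v phi u) (\<lambda>t. h *v picard_limit s phi (t - th))"
    by (rule dde_sol_shift[OF y shift])
  from solop_eq[OF this] solop_eq[OF y] show ?thesis by simp
qed

lemma solop_commute:
  assumes phi: "continuous_on {-th..0} phi"
    and commute: "\<And>t w. g *v blinfun_apply (A t) w = blinfun_apply (A t) (g *v w)"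
    and "g ** h = h ** g"
  shows "g *v solop (\<lambda>r. blinfun_apply (A r)) h b th t s phi v
           = solop (\<lambda>r. blinfun_apply (A r)) h b th t s (\<lambda>u. g *v phi u) v"
proof -
  note y = dde_sol_picard_limit[OF phi]
  have "sol s (\<lambda>u. g *v phi u) (\<lambda>t. g *v picard_limit s phi t)"
    by (rule dde_sol_commute[OF y commute \<open>g ** h = h ** g\<close>])
  from solop_eq[OF this] solop_eq[OF y] show ?thesis by simp
qed

end

section \<open>Discrete waves\<close>

lemma orthogonal_matrix_inv:
  assumes "orthogonal_matrix (g :: real^'n^'n)"
  shows "g ** matrix_inv g = mat 1" and "matrix_inv g ** g = mat 1"
proof -
  have "g ** transpose g = mat 1 \<and> transpose g ** g = mat 1"
    using assms by (simp add: orthogonal_matrix_def)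
  then have "g ** matrix_inv g = mat 1 \<and> matrix_inv g ** g = mat 1"
    unfolding matrix_inv_def by (rule someI)
  then show "g ** matrix_inv g = mat 1" and "matrix_inv g ** g = mat 1" by simp_all
qed

lemma orthogonal_matrix_inv_cancel:
  assumes "orthogonal_matrix (g :: real^'n^'n)"
  shows "matrix_inv g *v (g *v v) = v" and "g *v (matrix_inv g *v v) = v"
  using orthogonal_matrix_inv[OF assms] by (simp_all add: matrix_vector_mul_assoc)

lemma matgrp_simps [simp]:
  "carrier (matgrp S) = S" "monoid.mult (matgrp S) = (**)" "one (matgrp S) = mat 1"
  by (simp_all add: matgrp_def)

lemma matpow_commute: "matpow A k ** A = A ** matpow A k"
  by (induction k) (simp_all add: matrix_mul_assoc[symmetric])

lemma matpow_eq_nat_pow: "matpow A k = A [^]\<^bsub>matgrp S\<^esub> k"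
proof (induction k)
  case (Suc k)
  have "matpow A (Suc k) = matpow A k ** A" by (simp add: matpow_commute)
  with Suc show ?case by simp
qed simp

lemma group_matgrp_orthogonal:
  assumes one: "mat 1 \<in> S" and mult: "\<And>a c. a \<in> S \<Longrightarrow> c \<in> S \<Longrightarrow> a ** c \<in> S"
    and inv: "\<And>a. a \<in> S \<Longrightarrow> matrix_inv a \<in> S"
    and orth: "\<And>a. a \<in> S \<Longrightarrow> orthogonal_matrix (a :: real^'n^'n)"
  shows "group (matgrp S)" and "\<And>a. a \<in> S \<Longrightarrow> inv\<^bsub>matgrp S\<^esub> a = matrix_inv a"
proof -
  show group: "group (matgrp S)"
  proof (rule groupI)
    fix a assume "a \<in> carrier (matgrp S)"
    then show "\<exists>a'\<in>carrier (matgrp S). a' \<otimes>\<^bsub>matgrp S\<^esub> a = \<one>\<^bsub>matgrp S\<^esub>"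
      using inv orthogonal_matrix_inv(2)[OF orth] by auto
  qed (auto simp: one mult matrix_mul_assoc)
  fix a assume "a \<in> S"
  then show "inv\<^bsub>matgrp S\<^esub> a = matrix_inv a"
    using group.inv_equality[OF group, of "matrix_inv a" a] inv orthogonal_matrix_inv(2)[OF orth]
    by simp
qed

lemma image_matrix_mult:
  "(\<lambda>v. (A ** B) *v v) ` X = (\<lambda>v. A *v v) ` (\<lambda>v. B *v v) ` X"
  by (simp add: image_image matrix_vector_mul_assoc)

lemma Hgrp_closed:
  assumes grp: "compact_orth_group \<Gamma>"
  shows "mat 1 \<in> Hgrp \<Gamma> x"
    and "\<And>a c. a \<in> Hgrp \<Gamma> x \<Longrightarrow> c \<in> Hgrp \<Gamma> x \<Longrightarrow> a ** c \<in> Hgrp \<Gamma> x"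
    and "\<And>a. a \<in> Hgrp \<Gamma> x \<Longrightarrow> matrix_inv a \<in> Hgrp \<Gamma> x"
proof -
  show "mat 1 \<in> Hgrp \<Gamma> x" using grp by (simp add: Hgrp_def compact_orth_group_def)
  show "a ** c \<in> Hgrp \<Gamma> x" if "a \<in> Hgrp \<Gamma> x" "c \<in> Hgrp \<Gamma> x" for a c
    using that grp by (simp add: Hgrp_def compact_orth_group_def image_matrix_mult)
  show "matrix_inv a \<in> Hgrp \<Gamma> x" if a: "a \<in> Hgrp \<Gamma> x" for a
  proof -
    have "a \<in> \<Gamma>" and orbit: "(\<lambda>v. a *v v) ` range x = range x" using a by (auto simp: Hgrp_def)
    then have "orthogonal_matrix a" using grp by (simp add: compact_orth_group_def)
    have "(\<lambda>v. matrix_inv a *v v) ` range x = (\<lambda>v. (matrix_inv a ** a) *v v) ` range x"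
      by (simp add: image_matrix_mult orbit)
    also have "\<dots> = range x"
      using orthogonal_matrix_inv(2)[OF \<open>orthogonal_matrix a\<close>] by simp
    finally show ?thesis using grp \<open>a \<in> \<Gamma>\<close> by (simp add: Hgrp_def compact_orth_group_def)
  qed
qed

lemma group_matgrp_Hgrp:
  assumes grp: "compact_orth_group \<Gamma>"
  shows "group (matgrp (Hgrp \<Gamma> x))"
    and "\<And>a. a \<in> Hgrp \<Gamma> x \<Longrightarrow> inv\<^bsub>matgrp (Hgrp \<Gamma> x)\<^esub> a = matrix_inv a"
  using group_matgrp_orthogonal[OF Hgrp_closed[OF grp]] grp
  by (auto simp: Hgrp_def compact_orth_group_def)

lemma Kgrp_subgroup:
  assumes grp: "compact_orth_group \<Gamma>"
    and fixes_orbit: "\<And>g t. g \<in> Kgrp \<Gamma> x \<Longrightarrow> g *v x t = x t"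
  shows "subgroup (Kgrp \<Gamma> x) (matgrp (Hgrp \<Gamma> x))"
proof
  show "Kgrp \<Gamma> x \<subseteq> carrier (matgrp (Hgrp \<Gamma> x))"
  proof
    fix k assume "k \<in> Kgrp \<Gamma> x"
    then have "(\<lambda>v. k *v v) ` range x = range x" using fixes_orbit by (auto simp: image_image)
    with \<open>k \<in> Kgrp \<Gamma> x\<close> show "k \<in> carrier (matgrp (Hgrp \<Gamma> x))"
      by (simp add: Kgrp_def Hgrp_def)
  qed
  then show "inv\<^bsub>matgrp (Hgrp \<Gamma> x)\<^esub> a \<in> Kgrp \<Gamma> x" if "a \<in> Kgrp \<Gamma> x" for a
    using that grp orthogonal_matrix_inv_cancel(1)[of a "x 0"] group_matgrp_Hgrp(2)[OF grp]
    by (auto simp: Kgrp_def compact_orth_group_def)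
qed (use grp in \<open>auto simp: Kgrp_def compact_orth_group_def matrix_vector_mul_assoc[symmetric]\<close>)

lemma Kgrp_normal:
  assumes grp: "compact_orth_group \<Gamma>"
    and fixes_orbit: "\<And>g t. g \<in> Kgrp \<Gamma> x \<Longrightarrow> g *v x t = x t"
  shows "Kgrp \<Gamma> x \<lhd> matgrp (Hgrp \<Gamma> x)"
proof -
  have conjugate: "a ** k ** matrix_inv a \<in> Kgrp \<Gamma> x" if "a \<in> Hgrp \<Gamma> x" "k \<in> Kgrp \<Gamma> x" for a k
  proof -
    have "a \<in> \<Gamma>" using that by (simp add: Hgrp_def)
    have "(\<lambda>v. matrix_inv a *v v) ` range x = range x"
      using Hgrp_closed(3)[OF grp \<open>a \<in> Hgrp \<Gamma> x\<close>] by (simp add: Hgrp_def)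
    then have "matrix_inv a *v x 0 \<in> range x" by blast
    then obtain \<tau> where \<tau>: "matrix_inv a *v x 0 = x \<tau>" by blast
    have "(a ** k ** matrix_inv a) *v x 0 = a *v (matrix_inv a *v x 0)"
      using \<tau> fixes_orbit[OF \<open>k \<in> Kgrp \<Gamma> x\<close>] by (simp add: matrix_vector_mul_assoc[symmetric])
    also have "\<dots> = x 0"
      using grp \<open>a \<in> \<Gamma>\<close> by (simp add: orthogonal_matrix_inv_cancel compact_orth_group_def)
    finally show ?thesis
      using that grp by (simp add: Kgrp_def Hgrp_def compact_orth_group_def)
  qed
  show ?thesis
    using Kgrp_subgroup[OF grp fixes_orbit] conjugate group_matgrp_Hgrp[OF grp]
    by (simp add: group.normal_inv_iff)
qed

lemma (in normal) pow_order_FactGroup_mem: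
  assumes "a \<in> carrier G"
  shows "a [^] order (G Mod H) \<in> H"
proof -
  have "H #> (a [^] order (G Mod H)) = (H #> a) [^]\<^bsub>G Mod H\<^esub> order (G Mod H)"
    using FactGroup_pow[OF assms] by simp
  also have "\<dots> = H"
    using group.pow_order_eq_1[OF factorgroup_is_group] assms by (simp add: carrier_FactGroup)
  moreover have "a [^] order (G Mod H) \<in> H #> (a [^] order (G Mod H))"
    by (intro rcos_self nat_pow_closed assms subgroup_axioms)
  ultimately show ?thesis by simp
qed

lemma Kgrp_fixes_orbit:
  fixes f :: "real^'n \<Rightarrow> real^'n"
  assumes equiv: "\<forall>g\<in>\<Gamma>. \<forall>x. f (g *v x) = g *v f x"
    and deriv: "\<And>x. (f has_derivative blinfun_apply (Df x)) (at x)" and "continuous_on UNIV Df"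
    and sol: "\<And>t. (xs has_vector_derivative f (xs t)) (at t)"
    and "g \<in> Kgrp \<Gamma> xs"
  shows "g *v xs t = xs t"
proof (rule autonomous_ode_solutions_unique[OF deriv \<open>continuous_on UNIV Df\<close> _ sol])
  show "((\<lambda>t. g *v xs t) has_vector_derivative f (g *v xs t)) (at t)" for t
    using bounded_linear.has_vector_derivative[OF matrix_vector_mul_bounded_linear sol] equiv
      \<open>g \<in> Kgrp \<Gamma> xs\<close> by (simp add: Kgrp_def)
  show "g *v xs 0 = xs 0" using \<open>g \<in> Kgrp \<Gamma> xs\<close> by (simp add: Kgrp_def)
qed

lemma matpow_mem_Kgrp:
  assumes grp: "compact_orth_group \<Gamma>"
    and fixes_orbit: "\<And>g t. g \<in> Kgrp \<Gamma> x \<Longrightarrow> g *v x t = x t"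
    and wave: "(matgrp (Hgrp \<Gamma> x) Mod Kgrp \<Gamma> x) \<cong> integer_mod_group n" and "n > 0"
    and h: "h \<in> Hgrp \<Gamma> x"
  shows "matpow h n \<in> Kgrp \<Gamma> x"
proof -
  have "order (matgrp (Hgrp \<Gamma> x) Mod Kgrp \<Gamma> x) = n"
    using iso_same_card[OF wave] \<open>n > 0\<close> by (simp add: order_def carrier_integer_mod_group)
  moreover have "Kgrp \<Gamma> x \<lhd> matgrp (Hgrp \<Gamma> x)"
    by (rule Kgrp_normal[OF grp fixes_orbit])
  then have "h [^]\<^bsub>matgrp (Hgrp \<Gamma> x)\<^esub> order (matgrp (Hgrp \<Gamma> x) Mod Kgrp \<Gamma> x) \<in> Kgrp \<Gamma> x"
    by (rule normal.pow_order_FactGroup_mem) (simp add: h)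
  ultimately show ?thesis
    by (simp add: matpow_eq_nat_pow[where S = "Hgrp \<Gamma> x"])
qed

theorem lemma3p1:
  fixes f :: "real^'n \<Rightarrow> real^'n"
    and Df :: "real^'n \<Rightarrow> ((real^'n) \<Rightarrow>\<^sub>L (real^'n))"
    and D2 :: "real^'n \<Rightarrow> ((real^'n) \<Rightarrow>\<^sub>L ((real^'n) \<Rightarrow>\<^sub>L (real^'n)))"
    and \<Gamma> :: "(real^'n^'n) set"
    and xs :: "real \<Rightarrow> real^'n"
    and p th b :: real and n :: nat and h :: "real^'n^'n"
  assumes grp: "compact_orth_group \<Gamma>"
    and equiv: "\<forall>g\<in>\<Gamma>. \<forall>x. f (g *v x) = g *v f x"
    and deriv1: "\<forall>x. (f has_derivative blinfun_apply (Df x)) (at x)"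
    and deriv2: "\<forall>x. (Df has_derivative blinfun_apply (D2 x)) (at x)"
    and cont2: "continuous_on UNIV D2"
    and sol: "\<forall>t. (xs has_vector_derivative f (xs t)) (at t)"
    and pper: "p > 0" "\<forall>t. xs (t + p) = xs t"
    and pmin: "\<forall>q. 0 < q \<and> q < p \<longrightarrow> (\<exists>t. xs (t + q) \<noteq> xs t)"
    and npos: "n > 0"
    and wave: "(matgrp (Hgrp \<Gamma> xs) Mod Kgrp \<Gamma> xs) \<cong> integer_mod_group n"
    and hH: "h \<in> Hgrp \<Gamma> xs"
    and thrange: "0 \<le> th" "th < p"
    and thshift: "\<forall>t. h *v xs t = xs (t + th)"
  shows "\<forall>t s. s \<le> t \<longrightarrow> (\<forall>phi. continuous_on {-th..0} phi \<longrightarrow>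
           (\<forall>v\<in>{-th..0}.
              h *v solop (\<lambda>r. blinfun_apply (Df (xs r))) h b th t s phi v
              = solop (\<lambda>r. blinfun_apply (Df (xs r))) h b th (t + th) (s + th)
                  (\<lambda>u. h *v phi u) v)
         \<and> (\<forall>v\<in>{-th..0}.
              matpow h n *v solop (\<lambda>r. blinfun_apply (Df (xs r))) h b th t s phi v
              = solop (\<lambda>r. blinfun_apply (Df (xs r))) h b th t s
                  (\<lambda>u. matpow h n *v phi u) v))"
proof -
  have Df_cont: "continuous_on UNIV Df"
    using deriv2 by (metis continuous_at_imp_continuous_on has_derivative_continuous)
  have fixes_orbit: "g *v xs t = xs t" if "g \<in> Kgrp \<Gamma> xs" for g t
    using Kgrp_fixes_orbit[OF equiv _ Df_cont _ that] deriv1 sol by blast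
  have hn: "matpow h n \<in> Kgrp \<Gamma> xs"
    by (rule matpow_mem_Kgrp[OF grp fixes_orbit wave npos hH])
  have Df_equivariant: "g *v blinfun_apply (Df x) w = blinfun_apply (Df (g *v x)) (g *v w)"
    if "g \<in> \<Gamma>" for g x w
    using derivative_equivariant[where f = f and g = "(*v) g", OF _ matrix_vector_mul_bounded_linear]
      that equiv deriv1 by simp
  have shift: "h *v blinfun_apply (Df (xs (t - th))) w = blinfun_apply (Df (xs t)) (h *v w)" for t w
    using Df_equivariant[of h "xs (t - th)" w] hH thshift by (simp add: Hgrp_def)
  have commute: "matpow h n *v blinfun_apply (Df (xs t)) w = blinfun_apply (Df (xs t)) (matpow h n *v w)"
    for t w
    using Df_equivariant[of "matpow h n" "xs t" w] hn fixes_orbit[OF hn] by (simp add: Kgrp_def)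
  have "continuous_on UNIV xs"
    using sol by (metis continuous_at_imp_continuous_on has_vector_derivative_continuous)
  then have "continuous_on UNIV (\<lambda>r. Df (xs r))"
    by (rule continuous_on_compose2[OF Df_cont]) auto
  then interpret linear_dde "\<lambda>r. Df (xs r)" h b th
    using thrange(1) by unfold_locales
  show ?thesis
    using solop_shift[OF _ shift] solop_commute[OF _ commute matpow_commute] by blast
qed

end
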